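(* Let $N\ge0$ be an integer and $s,t,S$ be numbers with $s-S\in\mathbb{Z}$. Define, for $T\in t+\mathbb{Z}$, $$R^{(s,t)}_{(S,T)}(N)=\frac{(-1)^{t-T+N}N!}{(s-S+N)!\,(t-T+N)!\,(S-s+T-t-N)!},$$ with the convention that it is $0$ if any factorial argument is negative. Then $$\sum_{T\in t+\mathbb{Z}}R^{(s,t)}_{(S,T)}(N)=\delta_{s,S}.$$ *)

theory Defs
  imports "HOL-Analysis.Analysis"
begin

text \<open>The integer represented by a complex number (meaningful when the number lies in \<int>).\<close>
definition to_int :: "complex \<Rightarrow> int" where
  "to_int z = (THE k::int. z = of_int k)"

definition Rcoef :: "complex \<Rightarrow> complex \<Rightarrow> complex \<Rightarrow> complex \<Rightarrow> nat \<Rightarrow> real" where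
  "Rcoef s t S T N =
     (let a = to_int (s - S + of_nat N);
          b = to_int (t - T + of_nat N);
          c = to_int (S - s + T - t - of_nat N)
      in if a < 0 \<or> b < 0 \<or> c < 0 then 0
         else (-1) ^ nat b * fact N / (fact (nat a) * fact (nat b) * fact (nat c)))"

end

theory Submission
  imports Defs
begin

text \<open>Write \<open>s - S = -M\<close> and parametrise the lattice \<open>t + \<int>\<close> by \<open>T = t + N - j\<close>. The three
  factorial arguments become \<open>N - M\<close>, \<open>j\<close> and \<open>M - j\<close>, so the coefficient is
  \<open>(-1)^j (N choose M) (M choose j)\<close>, and the sum over \<open>j\<close> is \<open>(N choose M) (1 - 1)^M\<close>, which is
  \<open>1\<close> for \<open>M = 0\<close> and \<open>0\<close> otherwise. If \<open>M < 0\<close> the conditions \<open>j \<ge> 0\<close> and \<open>M - j \<ge> 0\<close>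
  are incompatible and every coefficient vanishes.\<close>

lemma to_int_of_int [simp]: "to_int (of_int k) = k"
  unfolding to_int_def by (rule the_equality) (auto simp: of_int_eq_iff)

lemma Rcoef_lattice_point:
  assumes "s - S = of_int d"
  shows "Rcoef s t S (t + of_int k) N =
    (if d + int N < 0 \<or> int N - k < 0 \<or> k - d - int N < 0 then 0
     else (-1) ^ nat (int N - k) * fact N /
            (fact (nat (d + int N)) * fact (nat (int N - k)) * fact (nat (k - d - int N))))"
proof -
  have S: "S = s - of_int d" using assms by (simp add: algebra_simps)
  have args: "s - S + of_nat N = (of_int (d + int N) :: complex)"
    "t - (t + of_int k) + of_nat N = (of_int (int N - k) :: complex)"
    "S - s + (t + of_int k) - t - of_nat N = (of_int (k - d - int N) :: complex)"
    using S by simp_all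
  show ?thesis unfolding Rcoef_def Let_def args to_int_of_int by simp
qed

lemma coset_IntsE:
  assumes "T - t \<in> \<int>"
  obtains k where "T = t + of_int k"
proof -
  from assms obtain k where "T - t = of_int k" by (auto elim: Ints_cases)
  then show thesis by (intro that[of k]) (simp add: algebra_simps)
qed

lemma Rcoef_eq_0_if_diff_pos:
  assumes "s - S = of_int d" "d > 0" "T - t \<in> \<int>"
  shows "Rcoef s t S T N = 0"
proof -
  obtain k where "T = t + of_int k" using assms(3) by (rule coset_IntsE)
  with assms(2) show ?thesis by (simp add: Rcoef_lattice_point[OF assms(1)]) linarith
qed

lemma Rcoef_eq_0_if_above:
  assumes "s - S = of_int d" "T - t \<in> \<int>" "T \<notin> range (\<lambda>j::nat. t + of_int (int N - int j))"
  shows "Rcoef s t S T N = 0"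
proof -
  obtain k where k: "T = t + of_int k" using assms(2) by (rule coset_IntsE)
  have "k > int N"
  proof (rule ccontr)
    assume "\<not> k > int N"
    then have "T = t + of_int (int N - int (nat (int N - k)))" by (simp add: k)
    with assms(3) show False by blast
  qed
  then show ?thesis by (simp add: k Rcoef_lattice_point[OF assms(1)])
qed

lemma fact_div_eq_choose_mult_choose:
  assumes "M \<le> N" "j \<le> M"
  shows "fact N / (fact (N - M) * fact j * fact (M - j)) =
    (of_nat (N choose M) * of_nat (M choose j) :: 'a::field_char_0)"
  using assms by (simp add: binomial_fact field_simps)

lemma Rcoef_eq_binomial:
  assumes "s - S = - of_nat M"
  shows "Rcoef s t S (t + of_int (int N - int j)) N =
    real (N choose M) * ((-1) ^ j * real (M choose j))"
proof -
  have d: "s - S = of_int (- int M)" using assms by simp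
  note Rcoef_j = Rcoef_lattice_point[OF d, of t "int N - int j" N]
  consider "N < M" | "M < j" | "M \<le> N" "j \<le> M" by linarith
  then show ?thesis
  proof cases
    case 3
    then have "Rcoef s t S (t + of_int (int N - int j)) N =
        (-1) ^ j * (fact N / (fact (N - M) * fact j * fact (M - j)))"
      by (simp add: Rcoef_j nat_diff_distrib del: of_int_diff)
    with 3 show ?thesis by (simp add: fact_div_eq_choose_mult_choose)
  qed (simp_all add: Rcoef_j del: of_int_diff)
qed

lemma has_sum_alternating_binomial:
  "((\<lambda>j. (-1) ^ j * of_nat (M choose j)) has_sum (if M = 0 then 1 else 0 :: 'a::{comm_ring_1, topological_space})) UNIV"
  by (rule has_sum_finite_neutralI[of "{..M}"]) (auto simp: choose_alternating_sum binomial_eq_0)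

theorem mainTheorem11:
  fixes s t S :: complex and N :: nat
  assumes "s - S \<in> \<int>"
  shows "((\<lambda>T. Rcoef s t S T N) has_sum (if s = S then 1 else 0)) {T. T - t \<in> \<int>}"
proof -
  obtain d where d: "s - S = of_int d" using assms by (auto elim: Ints_cases)
  show ?thesis
  proof (cases "d > 0")
    case True
    then show ?thesis using d by (auto intro!: has_sum_0 simp: Rcoef_eq_0_if_diff_pos)
  next
    case False
    define M where "M = nat (- d)"
    have M: "s - S = - of_nat M" using d False by (simp add: M_def)
    then have delta: "real (N choose M) * (if M = 0 then 1 else 0) = (if s = S then 1 else 0)"
      by (auto simp: right_minus_eq)
    have "((\<lambda>j. real (N choose M) * ((-1) ^ j * real (M choose j))) has_sum
        (if s = S then 1 else 0)) UNIV"
      using has_sum_cmult_right[OF has_sum_alternating_binomial, of "real (N choose M)" M]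
      unfolding delta .
    moreover have "inj (\<lambda>j::nat. t + of_int (int N - int j))"
      by (auto simp: inj_on_def)
    ultimately have "((\<lambda>T. Rcoef s t S T N) has_sum (if s = S then 1 else 0))
        (range (\<lambda>j::nat. t + of_int (int N - int j)))"
      by (simp only: has_sum_reindex comp_def Rcoef_eq_binomial[OF M])
    then show ?thesis
      by (rule has_sum_cong_neutral[THEN iffD1, rotated -1])
        (auto simp: Rcoef_eq_0_if_above[OF d])
  qed
qed

end
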